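(* Let $Z_1^N$ be as in the context, started at $Z_1^N(0)=\lfloor \log N/\varphi_N\rfloor$. Then for every $T>0$ and $\delta>0$, $$\lim_{N\to\infty}\mathbb P\Big(\sup_{t\le T}\big|\log_N^+\big(Z_1^N(t\varphi_N^{-1}\log N)\big)-(b+at)\big|>\delta\Big)=0.$$
   Context: Standing assumptions: $a>0$, $0<\varphi_N\le1$, and $-\log_N\varphi_N\to b\in[0,1)$ as $N\to\infty$. $Z_1^N$ is a continuous-time Markov chain on $\mathbb N_0$ that jumps from $k$ to $k+1$ at rate $(1+a\varphi_N)k$ and from $k$ to $k-1$ at rate $k$. $\log_N^+(x):=\max\{\log x/\log N,0\}$ for $x>0$, $\log_N^+(0):=0$. *)

theory Defs
  imports "HOL-Probability.Probability"
begin

definition logN :: "nat \<Rightarrow> real \<Rightarrow> real" where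
  "logN N x = ln x / ln (real N)"

definition logN_plus :: "nat \<Rightarrow> real \<Rightarrow> real" where
  "logN_plus N x = (if x > 0 then max (logN N x) 0 else 0)"

definition noise :: "(real \<times> real) stream measure" where
  "noise = stream_space (density lborel (exponential_density 1)
                          \<Otimes>\<^sub>M uniform_measure lborel {0..1})"

text \<open>Embedded jump chain of the birth-death chain with birth rate (1+r)k and
  death rate k (here r = a * phi_N), started at z0.  State 0 is absorbing.\<close>
fun jchain :: "real \<Rightarrow> nat \<Rightarrow> (real \<times> real) stream \<Rightarrow> nat \<Rightarrow> nat" where
  "jchain r z0 \<omega> 0 = z0"
| "jchain r z0 \<omega> (Suc n) =
     (let k = jchain r z0 \<omega> n in
      if k = 0 then 0
      else if snd (\<omega> !! n) < (1 + r) / (2 + r) then k + 1 else k - 1)"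

text \<open>Holding time in the n-th visited state: Exp((2+r)k) (arbitrary once absorbed).\<close>
definition hold :: "real \<Rightarrow> nat \<Rightarrow> (real \<times> real) stream \<Rightarrow> nat \<Rightarrow> real" where
  "hold r z0 \<omega> n = (let k = jchain r z0 \<omega> n in
     if k = 0 then 1 else fst (\<omega> !! n) / ((2 + r) * real k))"

definition jtime :: "real \<Rightarrow> nat \<Rightarrow> (real \<times> real) stream \<Rightarrow> nat \<Rightarrow> real" where
  "jtime r z0 \<omega> n = (\<Sum>i<n. hold r z0 \<omega> i)"

text \<open>The continuous-time chain: value at time t \<ge> 0 (set to 0 after a possible
  explosion, a null event).\<close>
definition bd_chain :: "real \<Rightarrow> nat \<Rightarrow> (real \<times> real) stream \<Rightarrow> real \<Rightarrow> nat" where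
  "bd_chain r z0 \<omega> t =
     (if \<exists>n. t < jtime r z0 \<omega> (Suc n)
      then jchain r z0 \<omega> (LEAST n. t < jtime r z0 \<omega> (Suc n)) else 0)"

definition dev_event :: "real \<Rightarrow> real \<Rightarrow> real \<Rightarrow> real \<Rightarrow> (nat \<Rightarrow> real) \<Rightarrow> nat \<Rightarrow> (real \<times> real) stream set" where
  "dev_event a b T \<delta> \<phi> N =
     {\<omega> \<in> space noise. \<exists>t\<in>{0..T}.
        \<bar>logN_plus N (real (bd_chain (a * \<phi> N) (nat \<lfloor>ln (real N) / \<phi> N\<rfloor>) \<omega>
                              (t * ln (real N) / \<phi> N))) - (b + a * t)\<bar> > \<delta>}"

end

theory Submission
  imports Defs
begin

text \<open>Write Z_n and \<tau>_n for the embedded jump chain and its jump times, z0 for the initial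
  value and r = a \<phi>_N.  Along the jumps, Z_n e^{-r \<tau>_n} is a martingale and
  V = (Z e^{-r \<tau>} - z0)^2 + (2 + r)/r Z e^{-2 r \<tau>} is a nonnegative martingale started at
  (2 + r) z0 / r, so by Ville's maximal inequality z0/2 < Z_n e^{-r \<tau>_n} < 3 z0/2 for all n
  outside an event of probability 4 (2 + r)/(r z0) = O(1 / log N).  Likewise
  2^n e^{-(E_0 + ... + E_{n-1})} is a nonnegative martingale in the exponential clocks E_j; outside
  an event of probability 1 / log N it stays below log N, which rules out explosion.  Off both
  events Z(s) lies within a factor 4 of z0 e^{r s} for all s \<ge> 0, so at s = t log N / \<phi>_N the
  quantity log_N Z differs from log_N z0 + a t by at most log_N 4, while log_N z0 \<rightarrow> b.\<close>

section \<open>Chains driven by i.i.d. noise\<close>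

primrec driven_chain :: "('s \<Rightarrow> 'w \<Rightarrow> 's) \<Rightarrow> 's \<Rightarrow> 'w stream \<Rightarrow> nat \<Rightarrow> 's" where
  "driven_chain F s \<omega> 0 = s"
| "driven_chain F s \<omega> (Suc n) = F (driven_chain F s \<omega> n) (\<omega> !! n)"

lemma driven_chain_Suc_shift:
  "driven_chain F s \<omega> (Suc n) = driven_chain F (F s (shd \<omega>)) (stl \<omega>) n"
  by (induction n) auto

lemma stream_section_ex_less_Suc:
  assumes "\<not> P s" and "t \<in> space M"
  shows "{x \<in> space (stream_space M). t ## x \<in> {\<omega> \<in> space (stream_space M). \<exists>n<Suc K. P (driven_chain F s \<omega> n)}}
    = {\<omega> \<in> space (stream_space M). \<exists>n<K. P (driven_chain F (F s t) \<omega> n)}"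
proof (intro Collect_cong conj_cong refl)
  fix x assume "x \<in> space (stream_space M)"
  then have "t ## x \<in> space (stream_space M)" using assms(2) by (simp add: space_stream_space)
  moreover have "(\<exists>n<Suc K. P (driven_chain F s (t ## x) n)) \<longleftrightarrow> (\<exists>n<K. P (driven_chain F (F s t) x n))"
    using assms(1) by (simp only: Ex_less_Suc2 driven_chain_Suc_shift driven_chain.simps(1) stream.sel) simp
  ultimately show "t ## x \<in> {\<omega> \<in> space (stream_space M). \<exists>n<Suc K. P (driven_chain F s \<omega> n)}
      \<longleftrightarrow> (\<exists>n<K. P (driven_chain F (F s t) x n))"
    by simp
qed

lemma measurable_driven_chain:
  assumes F: "(\<lambda>(s, w). F s w) \<in> SM \<Otimes>\<^sub>M M \<rightarrow>\<^sub>M SM" and s: "s \<in> space SM"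
  shows "(\<lambda>\<omega>. driven_chain F s \<omega> n) \<in> stream_space M \<rightarrow>\<^sub>M SM"
proof (induction n)
  case 0
  show ?case using s by simp
next
  case (Suc n)
  have "(\<lambda>\<omega>. (driven_chain F s \<omega> n, \<omega> !! n)) \<in> stream_space M \<rightarrow>\<^sub>M SM \<Otimes>\<^sub>M M"
    using Suc by (intro measurable_Pair) auto
  from measurable_comp[OF this F] show ?case by (simp add: o_def)
qed

lemma (in prob_space) measurable_emeasure_stream_section:
  assumes A: "A \<in> sets (stream_space M)"
  shows "(\<lambda>t. emeasure (stream_space M) {x \<in> space (stream_space M). t ## x \<in> A}) \<in> borel_measurable M"
proof -
  interpret stream_prob: prob_space "stream_space M" by (rule prob_space_stream_space)
  define Q where "Q = (\<lambda>p. fst p ## snd p) -` A \<inter> space (M \<Otimes>\<^sub>M stream_space M)"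
  have "(\<lambda>p. fst p ## snd p) \<in> M \<Otimes>\<^sub>M stream_space M \<rightarrow>\<^sub>M stream_space M"
    by measurable
  from measurable_sets[OF this A] have Q: "Q \<in> sets (M \<Otimes>\<^sub>M stream_space M)"
    unfolding Q_def .
  have "{x \<in> space (stream_space M). t ## x \<in> A} = Pair t -` Q" for t
    using sets.sets_into_space[OF A]
    by (auto simp: Q_def space_pair_measure space_stream_space) (metis subsetD streams_Stream)
  then show ?thesis using stream_prob.measurable_emeasure_Pair[OF Q] by simp
qed

locale driven_supermartingale = prob_space M
  for M :: "'w measure" and SM :: "'s measure"
    and F :: "'s \<Rightarrow> 'w \<Rightarrow> 's" and V :: "'s \<Rightarrow> ennreal" and S :: "'s set" +
  assumes measurable_step: "(\<lambda>(s, w). F s w) \<in> SM \<Otimes>\<^sub>M M \<rightarrow>\<^sub>M SM"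
    and borel_measurable_V: "V \<in> borel_measurable SM"
    and step_in_S: "\<And>s w. s \<in> S \<Longrightarrow> w \<in> space M \<Longrightarrow> F s w \<in> S"
    and S_subset_space: "S \<subseteq> space SM"
    and nn_integral_step_le: "\<And>s. s \<in> S \<Longrightarrow> (\<integral>\<^sup>+w. V (F s w) \<partial>M) \<le> V s"
begin

interpretation stream_prob: prob_space "stream_space M"
  by (rule prob_space_stream_space)

lemma borel_measurable_V_chain:
  "s \<in> S \<Longrightarrow> (\<lambda>\<omega>. V (driven_chain F s \<omega> n)) \<in> borel_measurable (stream_space M)"
  using measurable_driven_chain[OF measurable_step] S_subset_space
  by (intro measurable_compose[OF _ borel_measurable_V]) auto

lemma sets_exceeds_within:
  assumes "s \<in> S"
  shows "{\<omega> \<in> space (stream_space M). \<exists>n<K. lam \<le> V (driven_chain F s \<omega> n)} \<in> sets (stream_space M)"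
proof -
  note [measurable] = borel_measurable_V_chain[OF assms]
  show ?thesis by measurable
qed

lemma sets_exceeds:
  assumes "s \<in> S"
  shows "{\<omega> \<in> space (stream_space M). \<exists>n. lam \<le> V (driven_chain F s \<omega> n)} \<in> sets (stream_space M)"
proof -
  note [measurable] = borel_measurable_V_chain[OF assms]
  show ?thesis by measurable
qed

lemma maximal_inequality_within:
  "s \<in> S \<Longrightarrow>
    lam * emeasure (stream_space M) {\<omega> \<in> space (stream_space M). \<exists>n<K. lam \<le> V (driven_chain F s \<omega> n)}
      \<le> V s"
proof (induction K arbitrary: s)
  case 0
  then show ?case by simp
next
  case (Suc K)
  let ?SS = "stream_space M"
  let ?A = "{\<omega> \<in> space ?SS. \<exists>n<Suc K. lam \<le> V (driven_chain F s \<omega> n)}"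
  show ?case
  proof (cases "lam \<le> V s")
    case True
    have "lam * emeasure ?SS ?A \<le> lam * 1"
      by (intro mult_left_mono) (auto simp: stream_prob.emeasure_le_1)
    then show ?thesis using True by simp
  next
    case False
    have A: "?A \<in> sets ?SS" by (rule sets_exceeds_within[OF Suc.prems])
    have "lam * emeasure ?SS ?A = (\<integral>\<^sup>+t. lam * emeasure ?SS {x \<in> space ?SS. t ## x \<in> ?A} \<partial>M)"
      unfolding emeasure_stream_space[OF A]
      by (rule nn_integral_cmult[symmetric, OF measurable_emeasure_stream_section[OF A]])
    also have "\<dots> \<le> (\<integral>\<^sup>+t. V (F s t) \<partial>M)"
    proof (rule nn_integral_mono)
      fix t assume t: "t \<in> space M"
      show "lam * emeasure ?SS {x \<in> space ?SS. t ## x \<in> ?A} \<le> V (F s t)"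
        unfolding stream_section_ex_less_Suc[where P = "\<lambda>y. lam \<le> V y", OF False t]
        by (rule Suc.IH[OF step_in_S[OF Suc.prems t]])
    qed
    also have "\<dots> \<le> V s" by (rule nn_integral_step_le[OF Suc.prems])
    finally show ?thesis .
  qed
qed

lemma maximal_inequality:
  assumes s: "s \<in> S"
  shows "lam * emeasure (stream_space M) {\<omega> \<in> space (stream_space M). \<exists>n. lam \<le> V (driven_chain F s \<omega> n)}
    \<le> V s"
proof -
  define A where "A K = {\<omega> \<in> space (stream_space M). \<exists>n<K. lam \<le> V (driven_chain F s \<omega> n)}" for K
  have "A K \<in> sets (stream_space M)" for K
    unfolding A_def by (rule sets_exceeds_within[OF s])
  then have A: "range A \<subseteq> sets (stream_space M)"
    by blast
  have inc: "incseq A"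
    unfolding A_def by (rule incseq_SucI) (auto intro: less_SucI)
  have "(\<Union>K. A K) = {\<omega> \<in> space (stream_space M). \<exists>n. lam \<le> V (driven_chain F s \<omega> n)}"
    unfolding A_def by (auto intro: lessI)
  then have "lam * emeasure (stream_space M) {\<omega> \<in> space (stream_space M). \<exists>n. lam \<le> V (driven_chain F s \<omega> n)}
      = lam * (SUP K. emeasure (stream_space M) (A K))"
    using SUP_emeasure_incseq[OF A inc] by simp
  also have "\<dots> = (SUP K. lam * emeasure (stream_space M) (A K))"
    by (rule SUP_mult_left_ennreal)
  also have "\<dots> \<le> V s"
    unfolding A_def by (intro SUP_least maximal_inequality_within s)
  finally show ?thesis .
qed

lemma measure_exceeds_le:
  assumes s: "s \<in> S" and Vs: "V s = ennreal c" and c: "0 \<le> c" and lam: "0 < lam"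
  shows "measure (stream_space M) {\<omega> \<in> space (stream_space M). \<exists>n. ennreal lam \<le> V (driven_chain F s \<omega> n)}
    \<le> c / lam"
proof -
  let ?A = "{\<omega> \<in> space (stream_space M). \<exists>n. ennreal lam \<le> V (driven_chain F s \<omega> n)}"
  have "ennreal lam * ennreal (measure (stream_space M) ?A) \<le> ennreal c"
    using maximal_inequality[OF s, of "ennreal lam"] by (simp add: Vs stream_prob.emeasure_eq_measure)
  then have "ennreal (lam * measure (stream_space M) ?A) \<le> ennreal c"
    using lam by (simp add: ennreal_mult)
  then have "lam * measure (stream_space M) ?A \<le> c"
    using c by simp
  then show ?thesis
    using lam by (simp add: pos_le_divide_eq mult.commute)
qed

end


abbreviation noise_step :: "(real \<times> real) measure" where
  "noise_step \<equiv> density lborel (exponential_density 1) \<Otimes>\<^sub>M uniform_measure lborel {0..1}"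

lemma noise_eq_stream_space: "noise = stream_space noise_step"
  unfolding noise_def ..

lemma prob_space_noise_step: "prob_space noise_step"
proof -
  interpret D: prob_space "density lborel (exponential_density 1)"
    by (rule prob_space_exponential_density) simp
  interpret U: prob_space "uniform_measure lborel {0..1::real}"
    by (rule prob_space_uniform_measure) auto
  interpret P: pair_prob_space "density lborel (exponential_density 1)" "uniform_measure lborel {0..1::real}" ..
  show ?thesis by (rule P.prob_space_axioms)
qed

lemma prob_space_noise: "prob_space noise"
  unfolding noise_eq_stream_space
  by (rule prob_space.prob_space_stream_space[OF prob_space_noise_step])

lemma measurable_step_noise_step:
  assumes "(\<lambda>p. F (fst p) (snd p)) \<in> SM \<Otimes>\<^sub>M (borel \<Otimes>\<^sub>M borel) \<rightarrow>\<^sub>M SM"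
  shows "(\<lambda>(s, w). F s w) \<in> SM \<Otimes>\<^sub>M noise_step \<rightarrow>\<^sub>M SM"
proof -
  have "sets (SM \<Otimes>\<^sub>M noise_step) = sets (SM \<Otimes>\<^sub>M (borel \<Otimes>\<^sub>M borel))"
    by (intro sets_pair_measure_cong) auto
  then show ?thesis
    using assms by (subst measurable_cong_sets[OF _ refl]) (auto simp: case_prod_beta')
qed

lemma nn_integral_noise_step:
  assumes "f \<in> borel_measurable noise_step"
  shows "(\<integral>\<^sup>+w. f w \<partial>noise_step)
    = (\<integral>\<^sup>+e. \<integral>\<^sup>+u. f (e, u) \<partial>uniform_measure lborel {0..1} \<partial>density lborel (exponential_density 1))"
proof -
  interpret U: prob_space "uniform_measure lborel {0..1::real}"
    by (rule prob_space_uniform_measure) auto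
  show ?thesis using U.nn_integral_fst[OF assms] by simp
qed

lemma nn_integral_uniform_threshold:
  assumes "0 \<le> p" "p \<le> 1"
  shows "(\<integral>\<^sup>+u. (if u < p then c1 else c2) \<partial>uniform_measure lborel {0..1::real})
    = ennreal p * c1 + ennreal (1 - p) * c2"
proof -
  let ?U = "uniform_measure lborel {0..1::real}"
  have "(\<integral>\<^sup>+u. (if u < p then c1 else c2) \<partial>?U)
      = (\<integral>\<^sup>+u. c1 * indicator {..<p} u + c2 * indicator {p..} u \<partial>?U)"
    by (intro nn_integral_cong) (auto split: split_indicator)
  also have "\<dots> = c1 * emeasure ?U {..<p} + c2 * emeasure ?U {p..}"
    by (simp add: nn_integral_add nn_integral_cmult_indicator)
  also have "{0..1} \<inter> {..<p} = {0..<p}" and "{0..1} \<inter> {p..} = {p..1}"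
    using assms by auto
  then have "emeasure ?U {..<p} = ennreal p" and "emeasure ?U {p..} = ennreal (1 - p)"
    using assms by (simp_all add: divide_ennreal_def)
  ultimately show ?thesis by (simp add: mult.commute)
qed

lemma nn_integral_exponential_exp_combination:
  fixes k1 k2 \<alpha> \<beta> \<gamma> :: real
  assumes "0 \<le> k1" "0 \<le> k2"
    and nonneg: "\<And>e. 0 \<le> e \<Longrightarrow> 0 \<le> \<alpha> * exp (-k2 * e) + \<beta> * exp (-k1 * e) + \<gamma>"
  shows "(\<integral>\<^sup>+e. ennreal (\<alpha> * exp (-k2 * e) + \<beta> * exp (-k1 * e) + \<gamma>) \<partial>density lborel (exponential_density 1))
       = ennreal (\<alpha> / (1 + k2) + \<beta> / (1 + k1) + \<gamma>)"
proof -
  define h where "h e = \<alpha> * exp (-k2 * e) + \<beta> * exp (-k1 * e) + \<gamma>" for e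
  define g where "g e = \<alpha> * exp (-(1 + k2) * e) + \<beta> * exp (-(1 + k1) * e) + \<gamma> * exp (-1 * e)" for e
  define f where "f e = (if e \<in> {0..} then g e else 0)" for e
  have f: "f e = exponential_density 1 e * h e" for e
    by (auto simp: f_def g_def h_def exponential_density_def algebra_simps exp_add[symmetric])
  have "(\<integral>\<^sup>+e. ennreal (h e) \<partial>density lborel (exponential_density 1))
      = (\<integral>\<^sup>+e. ennreal (exponential_density 1 e) * ennreal (h e) \<partial>lborel)"
    by (subst nn_integral_density) (auto simp: h_def)
  also have "\<dots> = (\<integral>\<^sup>+e. ennreal (f e) \<partial>lborel)"
    using nonneg by (intro nn_integral_cong) (auto simp: f h_def ennreal_mult exponential_density_def)
  also have "\<dots> = ennreal (\<alpha> / (1 + k2) + \<beta> / (1 + k1) + \<gamma>)"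
  proof (rule nn_integral_has_integral_lborel)
    show "f \<in> borel_measurable borel" unfolding f_def g_def by measurable
    show "0 \<le> f e" for e
      using nonneg[of e] by (auto simp: f h_def exponential_density_def)
    have exp_integral: "((\<lambda>x. exp (-k * x)) has_integral 1 / k) {0..}" if "0 < k" for k :: real
      using has_integral_exp_minus_to_infinity[of k 0] that by simp
    have "(g has_integral (\<alpha> * (1 / (1 + k2)) + \<beta> * (1 / (1 + k1)) + \<gamma> * (1 / 1))) {0..}"
      unfolding g_def
      by (intro has_integral_add has_integral_mult_right exp_integral) (use assms(1,2) in auto)
    then show "(f has_integral (\<alpha> / (1 + k2) + \<beta> / (1 + k1) + \<gamma>)) UNIV"
      unfolding f_def by (subst has_integral_restrict_UNIV) simp
  qed
  finally show ?thesis unfolding h_def .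
qed

section \<open>A quadratic martingale of the jump chain\<close>

definition bd_step :: "real \<Rightarrow> real \<times> real \<Rightarrow> real \<times> real \<Rightarrow> real \<times> real" where
  "bd_step r s w =
    (if fst s = 0 then (0, snd s + 1)
     else (if snd w < (1 + r) / (2 + r) then fst s + 1 else fst s - 1,
           snd s + fst w / ((2 + r) * fst s)))"

lemma driven_chain_bd_step:
  "driven_chain (bd_step r) (real z0, 0) \<omega> n = (real (jchain r z0 \<omega> n), jtime r z0 \<omega> n)"
  by (induction n) (simp_all add: bd_step_def jtime_def hold_def Let_def of_nat_diff)

lemma measurable_bd_step: "(\<lambda>(s, w). bd_step r s w) \<in> (borel \<Otimes>\<^sub>M borel) \<Otimes>\<^sub>M noise_step \<rightarrow>\<^sub>M borel \<Otimes>\<^sub>M borel"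
  by (rule measurable_step_noise_step) (unfold bd_step_def, measurable)

text \<open>The martingale V of the outline, as a function of the state (Z, \<tau>): the second term
  compensates the square of the martingale Z e^{-r \<tau>}.\<close>
definition bd_lyapunov :: "real \<Rightarrow> real \<Rightarrow> real \<times> real \<Rightarrow> real" where
  "bd_lyapunov z r s = (fst s * exp (-r * snd s) - z)^2 + (2 + r) / r * fst s * exp (-2 * r * snd s)"

lemma borel_measurable_bd_lyapunov: "(\<lambda>s. bd_lyapunov z r s) \<in> borel_measurable (borel \<Otimes>\<^sub>M borel)"
  unfolding bd_lyapunov_def by measurable

lemma bd_lyapunov_nonneg: "0 < r \<Longrightarrow> 0 \<le> fst s \<Longrightarrow> 0 \<le> bd_lyapunov z r s"
  unfolding bd_lyapunov_def by (intro add_nonneg_nonneg) auto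

text \<open>The expectation of the step, computed from E[e^{-ke}] = 1/(1 + k) with k = r/((2 + r)x)
  and k = 2r/((2 + r)x).\<close>
lemma bd_lyapunov_mean_identity:
  fixes r x K z :: real
  assumes r: "0 < r" and x: "0 < x"
  defines "p \<equiv> (1 + r) / (2 + r)" and "C \<equiv> (2 + r) / r" and "A \<equiv> (2 + r) * x"
  shows "K^2 * (p * ((x + 1)^2 + C * (x + 1)) + (1 - p) * ((x - 1)^2 + C * (x - 1))) / (1 + 2 * r / A)
      + (-2 * z * K * (p * (x + 1) + (1 - p) * (x - 1))) / (1 + r / A) + z^2
    = (x * K - z)^2 + C * x * K^2"
proof -
  have mean: "p * u + (1 - p) * v = ((1 + r) * u + v) / (2 + r)" for u v
    using r by (simp add: p_def divide_simps)
  have "(1 + r) * ((x + 1)^2 + C * (x + 1)) + ((x - 1)^2 + C * (x - 1)) = (x + C) * (A + 2 * r)"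
    using r by (simp add: C_def A_def field_simps power2_eq_square)
  then have second: "(p * ((x + 1)^2 + C * (x + 1)) + (1 - p) * ((x - 1)^2 + C * (x - 1))) / (1 + 2 * r / A)
      = x * (x + C)"
    using r x unfolding mean by (simp add: A_def divide_simps) (simp add: algebra_simps, smt (verit) mult_pos_pos)
  have "(1 + r) * (x + 1) + (x - 1) = A + r"
    by (simp add: A_def algebra_simps)
  then have first: "(p * (x + 1) + (1 - p) * (x - 1)) / (1 + r / A) = x"
    using r x unfolding mean by (simp add: A_def divide_simps) (simp add: algebra_simps, smt (verit) mult_pos_pos)
  have "K^2 * (p * ((x + 1)^2 + C * (x + 1)) + (1 - p) * ((x - 1)^2 + C * (x - 1))) / (1 + 2 * r / A)
      = K^2 * (x * (x + C))"
    unfolding times_divide_eq_right[of "K^2", symmetric] second ..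
  moreover have "(-2 * z * K * (p * (x + 1) + (1 - p) * (x - 1))) / (1 + r / A) = -2 * z * K * x"
    unfolding times_divide_eq_right[of "-2 * z * K", symmetric] first ..
  ultimately show ?thesis
    by (simp add: power2_eq_square algebra_simps)
qed

lemma bd_lyapunov_jump_average:
  fixes r x \<tau> e z :: real
  defines "p \<equiv> (1 + r) / (2 + r)" and "C \<equiv> (2 + r) / r" and "A \<equiv> (2 + r) * x"
    and "K \<equiv> exp (-r * \<tau>)"
  shows "p * bd_lyapunov z r (x + 1, \<tau> + e / A) + (1 - p) * bd_lyapunov z r (x - 1, \<tau> + e / A)
    = K^2 * (p * ((x + 1)^2 + C * (x + 1)) + (1 - p) * ((x - 1)^2 + C * (x - 1))) * exp (-(2 * r / A) * e)
      + (-2 * z * K * (p * (x + 1) + (1 - p) * (x - 1))) * exp (-(r / A) * e) + z^2"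
proof -
  have "exp (-r * (\<tau> + e / A)) = K * exp (-(r / A) * e)"
    "exp (-2 * r * (\<tau> + e / A)) = K^2 * exp (-(r / A) * e)^2"
    "exp (-(2 * r / A) * e) = exp (-(r / A) * e)^2"
    by (simp_all add: K_def power2_eq_square exp_add[symmetric] algebra_simps)
  then show ?thesis
    unfolding bd_lyapunov_def fst_conv snd_conv C_def[symmetric]
    by (simp add: algebra_simps power2_eq_square)
qed

lemma nn_integral_bd_lyapunov_step:
  assumes r: "0 < r" and x: "1 \<le> x"
  shows "(\<integral>\<^sup>+w. ennreal (bd_lyapunov z r (bd_step r (x, \<tau>) w)) \<partial>noise_step) = ennreal (bd_lyapunov z r (x, \<tau>))"
proof -
  define A where "A = (2 + r) * x"
  define p where "p = (1 + r) / (2 + r)"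
  define C where "C = (2 + r) / r"
  define K where "K = exp (-r * \<tau>)"
  define \<alpha> where "\<alpha> = K^2 * (p * ((x + 1)^2 + C * (x + 1)) + (1 - p) * ((x - 1)^2 + C * (x - 1)))"
  define \<beta> where "\<beta> = -2 * z * K * (p * (x + 1) + (1 - p) * (x - 1))"
  define avg where "avg e = p * bd_lyapunov z r (x + 1, \<tau> + e / A) + (1 - p) * bd_lyapunov z r (x - 1, \<tau> + e / A)" for e
  have avg: "avg e = \<alpha> * exp (-(2 * r / A) * e) + \<beta> * exp (-(r / A) * e) + z^2" for e
    unfolding avg_def \<alpha>_def \<beta>_def A_def p_def C_def K_def by (rule bd_lyapunov_jump_average)
  have p: "0 \<le> p" "p \<le> 1" using r by (auto simp: p_def)
  have A: "0 < A" using r x by (simp add: A_def)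
  have step: "bd_step r (x, \<tau>) (e, u) = (if u < p then (x + 1, \<tau> + e / A) else (x - 1, \<tau> + e / A))" for e u
    using x by (simp add: bd_step_def p_def A_def)
  have nonneg: "0 \<le> bd_lyapunov z r (x + 1, t)" "0 \<le> bd_lyapunov z r (x - 1, t)" for t
    using x r by (auto intro!: bd_lyapunov_nonneg)
  have "(\<lambda>w. bd_step r (x, \<tau>) w) \<in> noise_step \<rightarrow>\<^sub>M borel \<Otimes>\<^sub>M borel"
    using measurable_Pair2[OF measurable_bd_step, of "(x, \<tau>)"] by (simp add: space_pair_measure)
  from measurable_compose[OF this borel_measurable_bd_lyapunov]
  have [measurable]: "(\<lambda>w. bd_lyapunov z r (bd_step r (x, \<tau>) w)) \<in> borel_measurable noise_step" .
  have "(\<integral>\<^sup>+w. ennreal (bd_lyapunov z r (bd_step r (x, \<tau>) w)) \<partial>noise_step)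
      = (\<integral>\<^sup>+e. \<integral>\<^sup>+u. ennreal (bd_lyapunov z r (bd_step r (x, \<tau>) (e, u)))
          \<partial>uniform_measure lborel {0..1} \<partial>density lborel (exponential_density 1))"
    by (intro nn_integral_noise_step) measurable
  also have "\<dots> = (\<integral>\<^sup>+e. ennreal (avg e) \<partial>density lborel (exponential_density 1))"
    using p nonneg
    by (intro nn_integral_cong)
      (simp add: step if_distrib[of "\<lambda>s. ennreal (bd_lyapunov z r s)"] nn_integral_uniform_threshold avg_def ennreal_mult ennreal_plus)
  also have "\<dots> = ennreal (\<alpha> / (1 + 2 * r / A) + \<beta> / (1 + r / A) + z^2)"
    unfolding avg
  proof (rule nn_integral_exponential_exp_combination)
    show "0 \<le> r / A" "0 \<le> 2 * r / A" using r A by auto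
    show "0 \<le> \<alpha> * exp (-(2 * r / A) * e) + \<beta> * exp (-(r / A) * e) + z^2" for e
      unfolding avg[symmetric] avg_def using nonneg p by (auto intro!: add_nonneg_nonneg)
  qed
  also have "\<alpha> / (1 + 2 * r / A) + \<beta> / (1 + r / A) + z^2 = (x * K - z)^2 + C * x * K^2"
    unfolding \<alpha>_def \<beta>_def p_def C_def A_def using bd_lyapunov_mean_identity[OF r] x by simp
  also have "\<dots> = bd_lyapunov z r (x, \<tau>)"
    by (simp add: bd_lyapunov_def K_def C_def power2_eq_square exp_add[symmetric] algebra_simps)
  finally show ?thesis .
qed

lemma driven_supermartingale_bd_lyapunov:
  assumes r: "0 < r"
  shows "driven_supermartingale noise_step (borel \<Otimes>\<^sub>M borel) (bd_step r)
    (\<lambda>s. ennreal (bd_lyapunov z r s)) {s. fst s \<in> \<nat>}"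
proof (intro driven_supermartingale.intro[OF prob_space_noise_step] driven_supermartingale_axioms.intro)
  show "(\<lambda>s. ennreal (bd_lyapunov z r s)) \<in> borel_measurable (borel \<Otimes>\<^sub>M borel)"
    using borel_measurable_bd_lyapunov by simp
  show "bd_step r s w \<in> {s. fst s \<in> \<nat>}" if "s \<in> {s. fst s \<in> \<nat>}" for s w
  proof -
    from that have "fst s \<in> \<nat>" by simp
    then obtain n where n: "fst s = real n" by (rule Nats_cases)
    show ?thesis
    proof (cases n)
      case 0
      then show ?thesis using n by (simp add: bd_step_def)
    next
      case (Suc m)
      then have "fst (bd_step r s w) \<in> {real (Suc n), real m}"
        using n by (simp add: bd_step_def)
      then show ?thesis by (metis insertE empty_iff mem_Collect_eq of_nat_in_Nats)
    qed
  qed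
  show "(\<integral>\<^sup>+w. ennreal (bd_lyapunov z r (bd_step r s w)) \<partial>noise_step) \<le> ennreal (bd_lyapunov z r s)"
    if "s \<in> {s. fst s \<in> \<nat>}" for s
  proof -
    from that have "fst s \<in> \<nat>" by simp
    then obtain n where "fst s = real n" by (rule Nats_cases)
    then obtain \<tau> where s: "s = (real n, \<tau>)" by (metis prod.collapse)
    show ?thesis
    proof (cases n)
      case 0
      interpret prob_space noise_step by (rule prob_space_noise_step)
      show ?thesis by (simp add: s 0 bd_step_def bd_lyapunov_def emeasure_space_1)
    next
      case (Suc m)
      then show ?thesis using nn_integral_bd_lyapunov_step[OF r, of "real n"] by (simp add: s)
    qed
  qed
qed (simp_all add: measurable_bd_step space_pair_measure)

lemma bd_lyapunov_exceeds:
  assumes r: "0 < r" and z0: "0 < z0"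
  defines "A \<equiv> {\<omega> \<in> space noise. \<exists>n. ennreal (real z0^2 / 4)
      \<le> ennreal (bd_lyapunov (real z0) r (real (jchain r z0 \<omega> n), jtime r z0 \<omega> n))}"
  shows "A \<in> sets noise" and "measure noise A \<le> 4 * (2 + r) / (r * real z0)"
proof -
  interpret driven_supermartingale noise_step "borel \<Otimes>\<^sub>M borel" "bd_step r"
    "\<lambda>s. ennreal (bd_lyapunov (real z0) r s)" "{s. fst s \<in> \<nat>}"
    using r by (rule driven_supermartingale_bd_lyapunov)
  have A: "A = {\<omega> \<in> space (stream_space noise_step). \<exists>n. ennreal (real z0^2 / 4)
      \<le> ennreal (bd_lyapunov (real z0) r (driven_chain (bd_step r) (real z0, 0) \<omega> n))}"
    by (simp add: A_def driven_chain_bd_step noise_eq_stream_space)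
  show "A \<in> sets noise"
    unfolding A noise_eq_stream_space by (rule sets_exceeds) simp
  have "measure noise A \<le> (2 + r) / r * real z0 / (real z0^2 / 4)"
    unfolding A noise_eq_stream_space
    by (rule measure_exceeds_le) (use r z0 in \<open>simp_all add: bd_lyapunov_def\<close>)
  also have "\<dots> = 4 * (2 + r) / (r * real z0)"
    using r z0 by (simp add: field_simps power2_eq_square)
  finally show "measure noise A \<le> 4 * (2 + r) / (r * real z0)" .
qed

lemma bd_lyapunov_lt_imp_bounds:
  assumes small: "bd_lyapunov z r (x, \<tau>) < z^2 / 4" and r: "0 < r" and x: "0 \<le> x" and z: "0 < z"
  shows "z / 2 * exp (r * \<tau>) < x \<and> x < 3 / 2 * z * exp (r * \<tau>)"
proof -
  have "0 \<le> (2 + r) / r * x * exp (-2 * r * \<tau>)"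
    using r x by simp
  then have "(x * exp (-r * \<tau>) - z)^2 < z^2 / 4"
    using small unfolding bd_lyapunov_def fst_conv snd_conv by linarith
  then have "\<bar>x * exp (-r * \<tau>) - z\<bar>^2 < (z / 2)^2"
    by (simp add: power_divide)
  then have "\<bar>x * exp (-r * \<tau>) - z\<bar> < z / 2"
    by (rule power2_less_imp_less) (use z in simp)
  then have "z / 2 < x * exp (-r * \<tau>)" and "x * exp (-r * \<tau>) < 3 / 2 * z"
    by linarith+
  then have bounds: "z / 2 * exp (r * \<tau>) < x * exp (-r * \<tau>) * exp (r * \<tau>)
      \<and> x * exp (-r * \<tau>) * exp (r * \<tau>) < 3 / 2 * z * exp (r * \<tau>)"
    by (simp only: mult_strict_right_mono exp_gt_zero)
  moreover have "x * exp (-r * \<tau>) * exp (r * \<tau>) = x"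
    by (simp add: exp_minus)
  ultimately show ?thesis by argo
qed

section \<open>Non-explosion\<close>

text \<open>The state is (E_0 + ... + E_{n-1}, n, flag), where E_j are the exponential parts of
  the noise and the flag records a negative sample, a null event on which the function is
  made infinite.  Since E[e^{-E}] = 1/2, 2^n e^{-(E_0 + ... + E_{n-1})} is a martingale;
  keeping it bounded forces the exponential samples, hence the jump times, to grow.\<close>
definition exp_sum_step :: "real \<times> real \<times> real \<Rightarrow> real \<times> real \<Rightarrow> real \<times> real \<times> real" where
  "exp_sum_step s w = (fst s + fst w, fst (snd s) + 1, if fst w < 0 then 1 else snd (snd s))"

definition exp_sum_lyapunov :: "real \<times> real \<times> real \<Rightarrow> ennreal" where
  "exp_sum_lyapunov s =
    (if 0 < snd (snd s) then \<infinity> else ennreal (2 powr fst (snd s) * exp (- fst s)))"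

lemma driven_chain_exp_sum_step:
  "driven_chain exp_sum_step (0, 0, 0) \<omega> n
    = ((\<Sum>j<n. fst (\<omega> !! j)), real n, if \<exists>j<n. fst (\<omega> !! j) < 0 then 1 else 0)"
  by (induction n) (auto simp: exp_sum_step_def less_Suc_eq)

lemma measurable_exp_sum_step:
  "(\<lambda>(s, w). exp_sum_step s w) \<in> (borel \<Otimes>\<^sub>M (borel \<Otimes>\<^sub>M borel)) \<Otimes>\<^sub>M noise_step \<rightarrow>\<^sub>M borel \<Otimes>\<^sub>M (borel \<Otimes>\<^sub>M borel)"
  by (rule measurable_step_noise_step) (unfold exp_sum_step_def, measurable)

lemma borel_measurable_exp_sum_lyapunov: "exp_sum_lyapunov \<in> borel_measurable (borel \<Otimes>\<^sub>M (borel \<Otimes>\<^sub>M borel))"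
  unfolding exp_sum_lyapunov_def by measurable

lemma nn_integral_exp_sum_lyapunov_step:
  "(\<integral>\<^sup>+w. exp_sum_lyapunov (exp_sum_step s w) \<partial>noise_step) \<le> exp_sum_lyapunov s"
proof (cases "0 < snd (snd s)")
  case True
  then show ?thesis by (simp add: exp_sum_lyapunov_def)
next
  case False
  let ?D = "density lborel (exponential_density 1)" and ?U = "uniform_measure lborel {0..1::real}"
  interpret U: prob_space ?U by (rule prob_space_uniform_measure) auto
  define c where "c = 2 powr (fst (snd s) + 1) * exp (- fst s)"
  have step: "exp_sum_lyapunov (exp_sum_step s (e, u)) = (if e < 0 then \<infinity> else ennreal (c * exp (-1 * e)))" for e u
    using False
    by (simp add: exp_sum_lyapunov_def exp_sum_step_def c_def exp_add[symmetric] algebra_simps)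
  have "(\<lambda>w. exp_sum_step s w) \<in> noise_step \<rightarrow>\<^sub>M borel \<Otimes>\<^sub>M (borel \<Otimes>\<^sub>M borel)"
    using measurable_Pair2[OF measurable_exp_sum_step, of s] by (simp add: space_pair_measure)
  from measurable_compose[OF this borel_measurable_exp_sum_lyapunov]
  have "(\<integral>\<^sup>+w. exp_sum_lyapunov (exp_sum_step s w) \<partial>noise_step)
      = (\<integral>\<^sup>+e. \<integral>\<^sup>+u. exp_sum_lyapunov (exp_sum_step s (e, u)) \<partial>?U \<partial>?D)"
    by (rule nn_integral_noise_step)
  also have "\<dots> = (\<integral>\<^sup>+e. (if e < 0 then \<infinity> else ennreal (c * exp (-1 * e))) \<partial>?D)"
    by (simp only: step nn_integral_const U.emeasure_space_1 mult_1_right)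
  also have "\<dots> = (\<integral>\<^sup>+e. ennreal (0 * exp (-0 * e) + c * exp (-1 * e) + 0) \<partial>?D)"
  proof (rule nn_integral_cong_AE)
    have "AE e in ?D. 0 \<le> e"
      by (subst AE_density) (auto simp: exponential_density_def intro!: AE_I2)
    then show "AE e in ?D. (if e < 0 then \<infinity> else ennreal (c * exp (-1 * e)))
        = ennreal (0 * exp (-0 * e) + c * exp (-1 * e) + 0)"
      by eventually_elim auto
  qed
  also have "\<dots> = ennreal (c / 2)"
    by (subst nn_integral_exponential_exp_combination) (auto simp: c_def)
  also have "\<dots> = exp_sum_lyapunov s"
    using False by (simp add: exp_sum_lyapunov_def c_def powr_add)
  finally show ?thesis by simp
qed

lemma driven_supermartingale_exp_sum_lyapunov:
  "driven_supermartingale noise_step (borel \<Otimes>\<^sub>M (borel \<Otimes>\<^sub>M borel)) exp_sum_step exp_sum_lyapunov UNIV"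
  by (intro driven_supermartingale.intro[OF prob_space_noise_step] driven_supermartingale_axioms.intro)
    (simp_all add: measurable_exp_sum_step borel_measurable_exp_sum_lyapunov
      nn_integral_exp_sum_lyapunov_step space_pair_measure)

lemma exp_sum_lyapunov_exceeds:
  assumes L: "0 < L"
  defines "A \<equiv> {\<omega> \<in> space noise. \<exists>n. ennreal L \<le> exp_sum_lyapunov (driven_chain exp_sum_step (0, 0, 0) \<omega> n)}"
  shows "A \<in> sets noise" and "measure noise A \<le> 1 / L"
proof -
  interpret driven_supermartingale noise_step "borel \<Otimes>\<^sub>M (borel \<Otimes>\<^sub>M borel)" exp_sum_step
    exp_sum_lyapunov UNIV
    by (rule driven_supermartingale_exp_sum_lyapunov)
  show "A \<in> sets noise"
    unfolding A_def noise_eq_stream_space by (rule sets_exceeds) simp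
  show "measure noise A \<le> 1 / L"
    unfolding A_def noise_eq_stream_space
    by (rule measure_exceeds_le) (use L in \<open>simp_all add: exp_sum_lyapunov_def\<close>)
qed

lemma exp_sum_lyapunov_lt_imp:
  assumes bounded: "\<And>n. exp_sum_lyapunov (driven_chain exp_sum_step (0, 0, 0) \<omega> n) < ennreal lam"
  shows "\<And>j. 0 \<le> fst (\<omega> !! j)"
    and "\<And>n. 2 ^ n * exp (- (\<Sum>j<n. fst (\<omega> !! j))) < lam"
proof -
  show nonneg: "0 \<le> fst (\<omega> !! j)" for j
  proof (rule ccontr)
    assume "\<not> 0 \<le> fst (\<omega> !! j)"
    then have "\<exists>i<Suc j. fst (\<omega> !! i) < 0" by auto
    then show False
      using bounded[of "Suc j"]
      by (simp add: driven_chain_exp_sum_step exp_sum_lyapunov_def del: driven_chain.simps(2))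
  qed
  show "2 ^ n * exp (- (\<Sum>j<n. fst (\<omega> !! j))) < lam" for n
  proof -
    have "\<not> (\<exists>j<n. fst (\<omega> !! j) < 0)"
      using nonneg by (simp add: not_less)
    then have "driven_chain exp_sum_step (0, 0, 0) \<omega> n = ((\<Sum>j<n. fst (\<omega> !! j)), real n, 0)"
      by (simp add: driven_chain_exp_sum_step)
    then have "exp_sum_lyapunov (driven_chain exp_sum_step (0, 0, 0) \<omega> n)
        = ennreal (2 ^ n * exp (- (\<Sum>j<n. fst (\<omega> !! j))))"
      by (simp add: exp_sum_lyapunov_def powr_realpow)
    then show ?thesis
      using bounded[of n] by (simp add: ennreal_less_iff)
  qed
qed

lemma jtime_0 [simp]: "jtime r z0 \<omega> 0 = 0"
  by (simp add: jtime_def)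

text \<open>The exponential samples are E_j = (2 + r) Z_j h_j \<le> (2 + r) B h_j with h_j the holding
  times; if all jump times stayed below s, their sum would be bounded and the growth bound
  would fail for large n.\<close>
lemma ex_jtime_gt:
  assumes r: "0 < r" and s: "0 \<le> s"
    and pos: "\<And>n. 0 < jchain r z0 \<omega> n"
    and exp_nonneg: "\<And>j. 0 \<le> fst (\<omega> !! j)"
    and growth: "\<And>n. 2 ^ n * exp (- (\<Sum>j<n. fst (\<omega> !! j))) < lam"
    and bounded: "\<And>n. jtime r z0 \<omega> n \<le> s \<Longrightarrow> real (jchain r z0 \<omega> n) \<le> B"
  shows "\<exists>n. s < jtime r z0 \<omega> (Suc n)"
proof (rule ccontr)
  assume "\<not> ?thesis"
  then have before: "jtime r z0 \<omega> n \<le> s" for n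
    using s by (cases n) (auto simp: not_less)
  have hold: "fst (\<omega> !! j) = (2 + r) * real (jchain r z0 \<omega> j) * hold r z0 \<omega> j" for j
    using pos[of j] r by (simp add: hold_def Let_def)
  have hold_nonneg: "0 \<le> hold r z0 \<omega> j" for j
    using pos[of j] r exp_nonneg[of j] by (simp add: hold_def Let_def)
  define c where "c = (2 + r) * B * s"
  have sum_le: "(\<Sum>j<n. fst (\<omega> !! j)) \<le> c" for n
  proof -
    have "(\<Sum>j<n. fst (\<omega> !! j)) \<le> (\<Sum>j<n. (2 + r) * B * hold r z0 \<omega> j)"
      unfolding hold using r bounded[OF before] hold_nonneg
      by (intro sum_mono mult_right_mono mult_left_mono) auto
    also have "\<dots> = (2 + r) * B * jtime r z0 \<omega> n"
      by (simp add: jtime_def sum_distrib_left)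
    also have "\<dots> \<le> c"
      unfolding c_def using r before[of n] bounded[OF before[of 0]] pos[of 0]
      by (intro mult_left_mono) auto
    finally show ?thesis .
  qed
  obtain n where n: "lam * exp c < 2 ^ n"
    using real_arch_pow[of 2] by auto
  have "2 ^ n * exp (- c) \<le> 2 ^ n * exp (- (\<Sum>j<n. fst (\<omega> !! j)))"
    using sum_le[of n] by simp
  also have "\<dots> < lam" by (rule growth)
  finally have "2 ^ n < lam * exp c"
    by (simp add: exp_minus field_simps)
  then show False using n by simp
qed

lemma bd_chain_eq_jchain:
  assumes "\<exists>n. s < jtime r z0 \<omega> (Suc n)" and "0 \<le> s"
  obtains n where "jtime r z0 \<omega> n \<le> s" "s < jtime r z0 \<omega> (Suc n)"
    "bd_chain r z0 \<omega> s = jchain r z0 \<omega> n"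
proof
  define n where "n = (LEAST n. s < jtime r z0 \<omega> (Suc n))"
  show "s < jtime r z0 \<omega> (Suc n)"
    using assms(1) unfolding n_def by (rule LeastI_ex)
  show "jtime r z0 \<omega> n \<le> s"
  proof (cases n)
    case (Suc m)
    then have "\<not> s < jtime r z0 \<omega> (Suc m)"
      unfolding n_def by (intro not_less_Least) simp
    then show ?thesis using Suc by simp
  qed (use assms(2) in simp)
  show "bd_chain r z0 \<omega> s = jchain r z0 \<omega> n"
    using assms(1) unfolding bd_chain_def n_def by simp
qed

text \<open>Between the jumps the chain is constant, and a jump changes it by at most one; this
  loses the factor 2 in the lower bound.\<close>
lemma bd_chain_exp_bounds:
  assumes r: "0 < r" and z0: "0 < z0" and s: "0 \<le> s"
    and small: "\<And>n. bd_lyapunov (real z0) r (real (jchain r z0 \<omega> n), jtime r z0 \<omega> n) < real z0^2 / 4"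
    and exp_nonneg: "\<And>j. 0 \<le> fst (\<omega> !! j)"
    and growth: "\<And>n. 2 ^ n * exp (- (\<Sum>j<n. fst (\<omega> !! j))) < lam"
  shows "real z0 / 4 * exp (r * s) \<le> real (bd_chain r z0 \<omega> s)
    \<and> real (bd_chain r z0 \<omega> s) \<le> 3 / 2 * real z0 * exp (r * s)"
proof -
  let ?Z = "\<lambda>n. real (jchain r z0 \<omega> n)" and ?\<tau> = "jtime r z0 \<omega>"
  have Z: "real z0 / 2 * exp (r * ?\<tau> n) < ?Z n \<and> ?Z n < 3 / 2 * real z0 * exp (r * ?\<tau> n)" for n
    using z0 r by (intro bd_lyapunov_lt_imp_bounds small) auto
  have pos: "0 < jchain r z0 \<omega> n" for n
  proof -
    have "0 < real z0 / 2 * exp (r * ?\<tau> n)" using z0 by simp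
    with Z[of n] show ?thesis by simp
  qed
  have upper: "?Z n \<le> 3 / 2 * real z0 * exp (r * s)" if "?\<tau> n \<le> s" for n
  proof -
    have "3 / 2 * real z0 * exp (r * ?\<tau> n) \<le> 3 / 2 * real z0 * exp (r * s)"
      using that r by (intro mult_left_mono) auto
    with Z[of n] show ?thesis by linarith
  qed
  have "\<exists>n. s < ?\<tau> (Suc n)"
    using r s pos exp_nonneg growth upper by (rule ex_jtime_gt)
  then obtain n where n: "?\<tau> n \<le> s" "s < ?\<tau> (Suc n)" and Zs: "bd_chain r z0 \<omega> s = jchain r z0 \<omega> n"
    using s by (rule bd_chain_eq_jchain)
  have "real z0 / 2 * exp (r * s) \<le> real z0 / 2 * exp (r * ?\<tau> (Suc n))"
    using n(2) r z0 by (intro mult_left_mono) auto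
  also have "\<dots> < ?Z (Suc n)" using Z by blast
  also have "\<dots> \<le> ?Z n + 1"
    using pos[of n] by (simp add: Let_def)
  finally have "real z0 / 2 * exp (r * s) < ?Z n + 1" .
  moreover have "1 \<le> ?Z n" using pos[of n] by simp
  ultimately have "real z0 / 4 * exp (r * s) \<le> ?Z n" by linarith
  then show ?thesis using upper[OF n(1)] Zs by simp
qed

lemma logN_plus_close:
  fixes N :: nat and Z z a t b \<delta> :: real
  assumes L: "0 < ln (real N)" and z: "0 < z"
    and lower: "z / 4 * exp (a * t * ln (real N)) \<le> Z"
    and upper: "Z \<le> 3 / 2 * z * exp (a * t * ln (real N))"
    and close: "\<bar>ln z / ln (real N) - b\<bar> + ln 4 / ln (real N) \<le> \<delta>"
    and nonneg: "0 \<le> b + a * t"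
  shows "\<bar>logN_plus N Z - (b + a * t)\<bar> \<le> \<delta>"
proof -
  define L where "L = ln (real N)"
  have "0 < z / 4 * exp (a * t * L)" using z by simp
  then have Z: "0 < Z" using lower by (simp add: L_def)
  have "ln z - ln 4 + a * t * L = ln (z / 4 * exp (a * t * L))"
    using z by (simp add: ln_mult ln_div)
  also have "\<dots> \<le> ln Z"
    using lower z Z by (subst ln_le_cancel_iff) (auto simp: L_def)
  finally have ln_lower: "ln z - ln 4 + a * t * L \<le> ln Z" .
  have "ln Z \<le> ln (3 / 2 * z * exp (a * t * L))"
    using upper z Z by (subst ln_le_cancel_iff) (auto simp: L_def)
  also have "\<dots> = ln (3 / 2) + ln z + a * t * L"
    using z by (simp add: ln_mult ln_div)
  also have "ln (3 / 2) \<le> (ln 4 :: real)" by simp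
  finally have "\<bar>ln Z - ln z - a * t * L\<bar> \<le> ln 4"
    using ln_lower by linarith
  then have "\<bar>ln Z - ln z - a * t * L\<bar> / L \<le> ln 4 / L"
    using L by (simp add: L_def divide_right_mono)
  then have "\<bar>ln Z / L - (ln z / L + a * t)\<bar> \<le> ln 4 / L"
    using L by (simp add: L_def field_simps)
  then have "\<bar>ln Z / L - (b + a * t)\<bar> \<le> \<delta>"
    using close by (simp add: L_def)
  then show ?thesis
    using Z nonneg by (simp add: logN_plus_def logN_def L_def)
qed

text \<open>The bounds of bd_chain_exp_bounds hold at all times s \<ge> 0.\<close>
lemma dev_event_subset_exceeds:
  fixes N :: nat and a b T \<delta> :: real and \<phi> :: "nat \<Rightarrow> real"
  defines "z0 \<equiv> nat \<lfloor>ln (real N) / \<phi> N\<rfloor>" and "r \<equiv> a * \<phi> N"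
  assumes a: "0 < a" and phi: "0 < \<phi> N" and L: "2 \<le> ln (real N)" and z0: "0 < z0"
    and close: "\<bar>ln (real z0) / ln (real N) - b\<bar> + ln 4 / ln (real N) \<le> \<delta>" and b: "0 \<le> b"
  shows "dev_event a b T \<delta> \<phi> N \<subseteq>
      {\<omega> \<in> space noise. \<exists>n. ennreal (real z0^2 / 4)
         \<le> ennreal (bd_lyapunov (real z0) r (real (jchain r z0 \<omega> n), jtime r z0 \<omega> n))}
    \<union> {\<omega> \<in> space noise. \<exists>n. ennreal (ln (real N))
         \<le> exp_sum_lyapunov (driven_chain exp_sum_step (0, 0, 0) \<omega> n)}"
proof (rule subsetI, rule ccontr)
  define L where "L = ln (real N)"
  have r: "0 < r" using a phi by (simp add: r_def)
  fix \<omega> assume dev: "\<omega> \<in> dev_event a b T \<delta> \<phi> N"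
  then have \<omega>: "\<omega> \<in> space noise" by (simp add: dev_event_def)
  obtain t where t: "t \<in> {0..T}"
    and far: "\<delta> < \<bar>logN_plus N (real (bd_chain r z0 \<omega> (t * L / \<phi> N))) - (b + a * t)\<bar>"
    using dev by (auto simp: dev_event_def r_def z0_def L_def)
  assume good: "\<omega> \<notin> {\<omega> \<in> space noise. \<exists>n. ennreal (real z0^2 / 4)
         \<le> ennreal (bd_lyapunov (real z0) r (real (jchain r z0 \<omega> n), jtime r z0 \<omega> n))}
    \<union> {\<omega> \<in> space noise. \<exists>n. ennreal (ln (real N))
         \<le> exp_sum_lyapunov (driven_chain exp_sum_step (0, 0, 0) \<omega> n)}"
  have not_exceeds:
    "\<not> ennreal (real z0^2 / 4) \<le> ennreal (bd_lyapunov (real z0) r (real (jchain r z0 \<omega> n), jtime r z0 \<omega> n))" for n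
    using good \<omega> by auto
  have small: "bd_lyapunov (real z0) r (real (jchain r z0 \<omega> n), jtime r z0 \<omega> n) < real z0^2 / 4" for n
    using bd_lyapunov_nonneg[OF r, of "(real (jchain r z0 \<omega> n), jtime r z0 \<omega> n)" "real z0"]
      not_exceeds[of n]
    by (simp add: not_le ennreal_less_iff)
  have "exp_sum_lyapunov (driven_chain exp_sum_step (0, 0, 0) \<omega> n) < ennreal L" for n
    using good \<omega> by (auto simp: L_def not_le)
  note growth = exp_sum_lyapunov_lt_imp[OF this]
  have "0 \<le> t * L / \<phi> N" using phi t L by (simp add: L_def)
  from bd_chain_exp_bounds[OF r z0 this small growth]
  have "real z0 / 4 * exp (a * t * L) \<le> real (bd_chain r z0 \<omega> (t * L / \<phi> N))"
    and "real (bd_chain r z0 \<omega> (t * L / \<phi> N)) \<le> 3 / 2 * real z0 * exp (a * t * L)"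
    using phi by (simp_all add: r_def mult.assoc)
  then have "\<bar>logN_plus N (real (bd_chain r z0 \<omega> (t * L / \<phi> N))) - (b + a * t)\<bar> \<le> \<delta>"
    using L z0 close b t a by (intro logN_plus_close[of N "real z0"]) (auto simp: L_def)
  then show False using far by simp
qed

section \<open>Measurability of the deviation event\<close>

lemma measurable_jchain_jtime:
  "(\<lambda>\<omega>. (real (jchain r z0 \<omega> n), jtime r z0 \<omega> n)) \<in> noise \<rightarrow>\<^sub>M borel \<Otimes>\<^sub>M borel"
  unfolding noise_eq_stream_space driven_chain_bd_step[symmetric]
  by (rule measurable_driven_chain[OF measurable_bd_step]) (simp add: space_pair_measure)

lemma borel_measurable_jchain [measurable]: "(\<lambda>\<omega>. real (jchain r z0 \<omega> n)) \<in> borel_measurable noise"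
  and borel_measurable_jtime [measurable]: "(\<lambda>\<omega>. jtime r z0 \<omega> n) \<in> borel_measurable noise"
  using measurable_jchain_jtime[of r z0 n] by (auto simp: measurable_pair_iff o_def)

lemma borel_measurable_bd_chain [measurable]: "(\<lambda>\<omega>. real (bd_chain r z0 \<omega> s)) \<in> borel_measurable noise"
proof -
  have "real (bd_chain r z0 \<omega> s) =
      (if \<exists>n. s < jtime r z0 \<omega> (Suc n) then real (jchain r z0 \<omega> (LEAST n. s < jtime r z0 \<omega> (Suc n))) else 0)"
    for \<omega> by (simp add: bd_chain_def)
  then show ?thesis by simp
qed

lemma borel_measurable_logN_plus [measurable]: "logN_plus N \<in> borel_measurable borel"
  unfolding logN_plus_def logN_def by measurable

lemma eventually_bd_chain_at_right: "eventually (\<lambda>s'. bd_chain r z0 \<omega> s' = bd_chain r z0 \<omega> s) (at_right s)"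
proof (cases "\<exists>n. s < jtime r z0 \<omega> (Suc n)")
  case True
  define n where "n = (LEAST n. s < jtime r z0 \<omega> (Suc n))"
  have n: "s < jtime r z0 \<omega> (Suc n)"
    using True unfolding n_def by (rule LeastI_ex)
  have before: "jtime r z0 \<omega> (Suc m) \<le> s" if "m < n" for m
    using not_less_Least[OF that[unfolded n_def]] by simp
  have "bd_chain r z0 \<omega> s' = bd_chain r z0 \<omega> s" if "s < s'" "s' < jtime r z0 \<omega> (Suc n)" for s'
  proof -
    have "(LEAST n. s' < jtime r z0 \<omega> (Suc n)) = n"
    proof (rule Least_equality)
      show "n \<le> m" if "s' < jtime r z0 \<omega> (Suc m)" for m
        using before[of m] \<open>s < s'\<close> that by (cases "m < n") auto
    qed (use that in simp)
    then show ?thesis using that True unfolding bd_chain_def n_def by auto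
  qed
  then show ?thesis using n by (auto simp: eventually_at_right_field)
next
  case False
  have "\<not> (\<exists>n. s' < jtime r z0 \<omega> (Suc n))" if "s < s'" for s'
    using False that by (meson less_trans)
  then have "bd_chain r z0 \<omega> s' = bd_chain r z0 \<omega> s" if "s < s'" for s'
    using False that by (simp add: bd_chain_def)
  then show ?thesis by (auto simp: eventually_at_right_field intro: gt_ex)
qed

lemma eventually_at_right_scale:
  fixes t \<kappa> :: real
  assumes "eventually P (at_right (t * \<kappa>))" and "0 < \<kappa>"
  shows "eventually (\<lambda>t'. P (t' * \<kappa>)) (at_right t)"
proof -
  obtain b where "t * \<kappa> < b" and P: "\<And>y. t * \<kappa> < y \<Longrightarrow> y < b \<Longrightarrow> P y"
    using assms(1) by (auto simp: eventually_at_right_field)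
  then show ?thesis
    using assms(2) unfolding eventually_at_right_field
    by (intro exI[of _ "b / \<kappa>"]) (auto intro!: P simp: field_simps)
qed

text \<open>Makes the deviation event a countable union: an exceedance on [0, T] persists for a
  short while to the right, where g is constant and f continuous, so it also occurs at a
  rational time or at T.\<close>
lemma ex_interval_iff_ex_rational:
  fixes g :: "real \<Rightarrow> 'a" and f :: "'a \<Rightarrow> real \<Rightarrow> real"
  assumes right_const: "\<And>t. eventually (\<lambda>t'. g t' = g t) (at_right t)"
    and cont: "\<And>c t. isCont (f c) t"
  shows "(\<exists>t\<in>{0..T}. d < f (g t) t) \<longleftrightarrow> (\<exists>t\<in>{0..T} \<inter> (\<rat> \<union> {T}). d < f (g t) t)"
proof
  assume "\<exists>t\<in>{0..T}. d < f (g t) t"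
  then obtain t where t: "t \<in> {0..T}" "d < f (g t) t" by blast
  show "\<exists>t\<in>{0..T} \<inter> (\<rat> \<union> {T}). d < f (g t) t"
  proof (cases "t = T")
    case False
    have "((\<lambda>t'. f (g t) t') \<longlongrightarrow> f (g t) t) (at_right t)"
      using cont by (simp add: isCont_def filterlim_at_split)
    then have "eventually (\<lambda>t'. d < f (g t) t') (at_right t)"
      using t(2) by (rule order_tendstoD)
    moreover have "eventually (\<lambda>t'. t' < T) (at_right t)"
      using False t(1) by (auto simp: eventually_at_right_field intro!: exI[of _ T])
    ultimately have "eventually (\<lambda>t'. t' < T \<and> d < f (g t') t') (at_right t)"
      using right_const[of t] by eventually_elim auto
    then obtain b where "t < b" and b: "\<And>y. t < y \<Longrightarrow> y < b \<Longrightarrow> y < T \<and> d < f (g y) y"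
      by (auto simp: eventually_at_right_field)
    obtain q where q: "q \<in> \<rat>" "t < q" "q < b"
      using Rats_dense_in_real[OF \<open>t < b\<close>] by blast
    then show ?thesis
      using t(1) b[of q] by (intro bexI[of _ q]) auto
  qed (use t in auto)
qed auto

lemma dev_event_sets:
  assumes phi: "0 < \<phi> N"
  shows "dev_event a b T \<delta> \<phi> N \<in> sets noise"
proof -
  define \<kappa> where "\<kappa> = ln (real N) / \<phi> N"
  define g where "g \<omega> t = bd_chain (a * \<phi> N) (nat \<lfloor>\<kappa>\<rfloor>) \<omega> (t * \<kappa>)" for \<omega> t
  have "0 \<le> \<kappa>" using phi by (cases N) (simp_all add: \<kappa>_def)
  then have right_const: "eventually (\<lambda>t'. g \<omega> t' = g \<omega> t) (at_right t)" for \<omega> t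
    unfolding g_def
    by (cases "\<kappa> = 0") (auto intro: eventually_at_right_scale eventually_bd_chain_at_right)
  have "dev_event a b T \<delta> \<phi> N = (\<Union>t\<in>{0..T} \<inter> (\<rat> \<union> {T}).
      {\<omega> \<in> space noise. \<delta> < \<bar>logN_plus N (real (g \<omega> t)) - (b + a * t)\<bar>})"
    using ex_interval_iff_ex_rational[OF right_const, of "\<lambda>k t. \<bar>logN_plus N (real k) - (b + a * t)\<bar>"]
    by (auto simp: dev_event_def g_def \<kappa>_def)
  also have "\<dots> \<in> sets noise"
    unfolding g_def
    by (intro sets.countable_UN'' countable_Int2 countable_Un countable_rat) auto
  finally show ?thesis .
qed

lemma floor_quotient_bounds:
  fixes L \<phi> :: real
  assumes "0 < \<phi>" "\<phi> \<le> 1" "2 \<le> L"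
  shows "L / (2 * \<phi>) \<le> real (nat \<lfloor>L / \<phi>\<rfloor>)" and "real (nat \<lfloor>L / \<phi>\<rfloor>) \<le> L / \<phi>"
proof -
  have "L \<le> L / \<phi>" using assms by (simp add: le_divide_eq)
  then have "2 \<le> L / \<phi>" using assms by simp
  then have "real (nat \<lfloor>L / \<phi>\<rfloor>) = of_int \<lfloor>L / \<phi>\<rfloor>" by simp
  moreover have "L / \<phi> - 1 < of_int \<lfloor>L / \<phi>\<rfloor>" "of_int \<lfloor>L / \<phi>\<rfloor> \<le> L / \<phi>"
    by linarith+
  moreover have "L / (2 * \<phi>) = (L / \<phi>) / 2" by simp
  ultimately show "L / (2 * \<phi>) \<le> real (nat \<lfloor>L / \<phi>\<rfloor>)" and "real (nat \<lfloor>L / \<phi>\<rfloor>) \<le> L / \<phi>"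
    using \<open>2 \<le> L / \<phi>\<close> by linarith+
qed

lemma ln_floor_quotient_bounds:
  fixes L \<phi> :: real
  assumes p: "0 < \<phi>" "\<phi> \<le> 1" and L: "2 \<le> L"
  shows "ln L - ln \<phi> - ln 2 \<le> ln (real (nat \<lfloor>L / \<phi>\<rfloor>))"
    and "ln (real (nat \<lfloor>L / \<phi>\<rfloor>)) \<le> ln L - ln \<phi>"
proof -
  note bounds = floor_quotient_bounds[OF p L]
  have pos: "0 < L / (2 * \<phi>)" "0 < L / \<phi>" using p L by simp_all
  then have zpos: "0 < real (nat \<lfloor>L / \<phi>\<rfloor>)" using bounds(1) by linarith
  have "ln L - ln \<phi> - ln 2 = ln (L / (2 * \<phi>))"
    using p L by (simp add: ln_div ln_mult)
  also have "\<dots> \<le> ln (real (nat \<lfloor>L / \<phi>\<rfloor>))"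
    by (subst ln_le_cancel_iff[OF pos(1) zpos]) (rule bounds(1))
  finally show "ln L - ln \<phi> - ln 2 \<le> ln (real (nat \<lfloor>L / \<phi>\<rfloor>))" .
  have "ln (real (nat \<lfloor>L / \<phi>\<rfloor>)) \<le> ln (L / \<phi>)"
    by (subst ln_le_cancel_iff[OF zpos pos(2)]) (rule bounds(2))
  also have "\<dots> = ln L - ln \<phi>"
    using p L by (simp add: ln_div)
  finally show "ln (real (nat \<lfloor>L / \<phi>\<rfloor>)) \<le> ln L - ln \<phi>" .
qed

lemma measure_dev_event_le:
  fixes N :: nat and a b T \<delta> :: real and \<phi> :: "nat \<Rightarrow> real"
  defines "z0 \<equiv> nat \<lfloor>ln (real N) / \<phi> N\<rfloor>"
  assumes a: "0 < a" and phi: "0 < \<phi> N" "\<phi> N \<le> 1" and L: "2 \<le> ln (real N)"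
    and close: "\<bar>ln (real z0) / ln (real N) - b\<bar> + ln 4 / ln (real N) \<le> \<delta>" and b: "0 \<le> b"
  shows "measure noise (dev_event a b T \<delta> \<phi> N)
     \<le> 4 * (2 + a * \<phi> N) / (a * \<phi> N * real z0) + 1 / ln (real N)"
proof -
  define r where "r = a * \<phi> N"
  have r: "0 < r" using a phi by (simp add: r_def)
  have "0 < ln (real N) / (2 * \<phi> N)" using phi L by simp
  then have "0 < real z0"
    using floor_quotient_bounds(1)[OF phi L] unfolding z0_def by linarith
  then have z0: "0 < z0" by simp
  have "0 < ln (real N)" using L by simp
  define A1 where "A1 = {\<omega> \<in> space noise. \<exists>n. ennreal (real z0^2 / 4)
      \<le> ennreal (bd_lyapunov (real z0) r (real (jchain r z0 \<omega> n), jtime r z0 \<omega> n))}"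
  define A2 where "A2 = {\<omega> \<in> space noise. \<exists>n. ennreal (ln (real N))
      \<le> exp_sum_lyapunov (driven_chain exp_sum_step (0, 0, 0) \<omega> n)}"
  have A1: "A1 \<in> sets noise" "measure noise A1 \<le> 4 * (2 + r) / (r * real z0)"
    unfolding A1_def by (rule bd_lyapunov_exceeds[OF r z0])+
  have A2: "A2 \<in> sets noise" "measure noise A2 \<le> 1 / ln (real N)"
    unfolding A2_def by (rule exp_sum_lyapunov_exceeds[OF \<open>0 < ln (real N)\<close>])+
  interpret prob_space noise by (rule prob_space_noise)
  have "measure noise (dev_event a b T \<delta> \<phi> N) \<le> measure noise (A1 \<union> A2)"
    using dev_event_subset_exceeds[where \<phi> = \<phi> and N = N and T = T,
        OF a phi(1) L z0[unfolded z0_def] close[unfolded z0_def] b] A1(1) A2(1)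
    unfolding A1_def A2_def z0_def r_def by (intro finite_measure_mono) auto
  also have "\<dots> \<le> measure noise A1 + measure noise A2"
    using A1(1) A2(1) by (rule measure_Un_le)
  also have "\<dots> \<le> 4 * (2 + r) / (r * real z0) + 1 / ln (real N)"
    using A1(2) A2(2) by (rule add_mono)
  finally show ?thesis by (simp add: r_def mult.assoc)
qed

lemma tendsto_divide_ln_0: "((\<lambda>N. c / ln (real N)) \<longlongrightarrow> 0) sequentially"
  by (intro tendsto_divide_0[OF tendsto_const] filterlim_at_top_imp_at_infinity
      filterlim_compose[OF ln_at_top filterlim_real_sequentially])

lemma ln_initial_over_ln_tendsto:
  fixes \<phi> :: "nat \<Rightarrow> real"
  assumes phi: "\<And>N. 0 < \<phi> N \<and> \<phi> N \<le> 1"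
    and lim: "((\<lambda>N. - logN N (\<phi> N)) \<longlongrightarrow> b) sequentially"
  shows "((\<lambda>N. ln (real (nat \<lfloor>ln (real N) / \<phi> N\<rfloor>)) / ln (real N)) \<longlongrightarrow> b) sequentially"
proof -
  define L where "L N = ln (real N)" for N
  define u where "u N = ln (L N) / L N - ln (\<phi> N) / L N" for N
  have L: "filterlim L at_top sequentially"
    unfolding L_def by (rule filterlim_compose[OF ln_at_top filterlim_real_sequentially])
  have u: "(u \<longlongrightarrow> b) sequentially"
    using tendsto_add[OF filterlim_compose[OF ln_x_over_x_tendsto_0 L] lim]
    by (simp add: u_def[abs_def] L_def logN_def)
  have "u N - ln 2 / L N \<le> ln (real (nat \<lfloor>L N / \<phi> N\<rfloor>)) / L N
      \<and> ln (real (nat \<lfloor>L N / \<phi> N\<rfloor>)) / L N \<le> u N" if L2: "2 \<le> L N" for N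
  proof -
    have p: "0 < \<phi> N" "\<phi> N \<le> 1" using phi[of N] by auto
    note lower = ln_floor_quotient_bounds(1)[OF p L2] and upper = ln_floor_quotient_bounds(2)[OF p L2]
    show ?thesis
      using divide_right_mono[OF lower, of "L N"] divide_right_mono[OF upper, of "L N"] L2
      by (simp add: u_def diff_divide_distrib)
  qed
  note bounds_at = this
  have ev: "eventually (\<lambda>N. 2 \<le> L N) sequentially"
    using L by (simp add: filterlim_at_top)
  have "eventually (\<lambda>N. u N - ln 2 / L N \<le> ln (real (nat \<lfloor>L N / \<phi> N\<rfloor>)) / L N) sequentially"
    using ev by (rule eventually_mono) (use bounds_at in blast)
  moreover have "eventually (\<lambda>N. ln (real (nat \<lfloor>L N / \<phi> N\<rfloor>)) / L N \<le> u N) sequentially"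
    using ev by (rule eventually_mono) (use bounds_at in blast)
  moreover have "((\<lambda>N. u N - ln 2 / L N) \<longlongrightarrow> b) sequentially"
    using tendsto_diff[OF u tendsto_divide_ln_0[of "ln 2"]] unfolding L_def by simp
  ultimately have "((\<lambda>N. ln (real (nat \<lfloor>L N / \<phi> N\<rfloor>)) / L N) \<longlongrightarrow> b) sequentially"
    using u by (rule tendsto_sandwich)
  then show ?thesis
    unfolding L_def .
qed

lemma eventually_measure_dev_event_le:
  fixes a b T \<delta> :: real and \<phi> :: "nat \<Rightarrow> real"
  assumes a: "0 < a" and phi: "\<And>N. 0 < \<phi> N \<and> \<phi> N \<le> 1"
    and lim: "((\<lambda>N. - logN N (\<phi> N)) \<longlongrightarrow> b) sequentially" and b: "0 \<le> b" and \<delta>: "0 < \<delta>"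
  shows "eventually (\<lambda>N. measure noise (dev_event a b T \<delta> \<phi> N)
    \<le> (8 * (2 + a) / a + 1) / ln (real N)) sequentially"
proof -
  have L: "filterlim (\<lambda>N. ln (real N)) at_top sequentially"
    by (rule filterlim_compose[OF ln_at_top filterlim_real_sequentially])
  have "((\<lambda>N. \<bar>ln (real (nat \<lfloor>ln (real N) / \<phi> N\<rfloor>)) / ln (real N) - b\<bar> + ln 4 / ln (real N))
      \<longlongrightarrow> \<bar>b - b\<bar> + 0) sequentially"
    by (intro tendsto_intros ln_initial_over_ln_tendsto[OF phi lim] tendsto_divide_ln_0)
  then have "eventually (\<lambda>N. \<bar>ln (real (nat \<lfloor>ln (real N) / \<phi> N\<rfloor>)) / ln (real N) - b\<bar>
      + ln 4 / ln (real N) < \<delta>) sequentially"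
    using \<delta> by (intro order_tendstoD(2)) auto
  moreover have "eventually (\<lambda>N. 2 \<le> ln (real N)) sequentially"
    using L by (simp add: filterlim_at_top)
  ultimately show ?thesis
  proof eventually_elim
    case (elim N)
    define z0 where "z0 = real (nat \<lfloor>ln (real N) / \<phi> N\<rfloor>)"
    have p: "0 < \<phi> N" "\<phi> N \<le> 1" using phi[of N] by auto
    have "ln (real N) / 2 = \<phi> N * (ln (real N) / (2 * \<phi> N))" using p by simp
    also have "\<dots> \<le> \<phi> N * z0"
      unfolding z0_def using floor_quotient_bounds(1)[OF p elim(2)] p by (intro mult_left_mono) auto
    finally have "a * (ln (real N) / 2) \<le> a * \<phi> N * z0"
      using a by (simp add: mult.assoc)
    then have "4 * (2 + a * \<phi> N) / (a * \<phi> N * z0) \<le> 4 * (2 + a) / (a * (ln (real N) / 2))"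
      using a p elim(2) by (intro frac_le) auto
    moreover have "4 * (2 + a) / (a * (ln (real N) / 2)) + 1 / ln (real N) = (8 * (2 + a) / a + 1) / ln (real N)"
      using a elim(2) by (simp add: field_simps)
    ultimately show ?case
      using measure_dev_event_le[where \<phi> = \<phi> and N = N and T = T, OF a p elim(2) less_imp_le[OF elim(1)] b]
      by (simp add: z0_def)
  qed
qed

theorem proposition3p2:
  fixes a b T \<delta> :: real and \<phi> :: "nat \<Rightarrow> real"
  assumes "a > 0"
    and "\<And>N. 0 < \<phi> N \<and> \<phi> N \<le> 1"
    and "((\<lambda>N. - logN N (\<phi> N)) \<longlongrightarrow> b) sequentially"
    and "0 \<le> b" and "b < 1"
    and "T > 0" and "\<delta> > 0"
  shows "(\<forall>N. dev_event a b T \<delta> \<phi> N \<in> sets noise)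
         \<and> ((\<lambda>N. measure noise (dev_event a b T \<delta> \<phi> N)) \<longlongrightarrow> 0) sequentially"
proof
  show "\<forall>N. dev_event a b T \<delta> \<phi> N \<in> sets noise"
    using assms(2) by (simp add: dev_event_sets)
  show "((\<lambda>N. measure noise (dev_event a b T \<delta> \<phi> N)) \<longlongrightarrow> 0) sequentially"
    using eventually_measure_dev_event_le[OF assms(1-4,7), of T]
    by (intro tendsto_sandwich[OF _ _ tendsto_const tendsto_divide_ln_0]) auto
qed

end
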